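(* Let $Y$ be a fixed point combinator, $f$ a variable, and $B'_Y \equiv Y(\lambda x.\, f x (f x (Y(\lambda y.\, f x y))))$. Then for every $n\ge0$, if the subtree of $\mathrm{BT}^c(B'_Y)$ at position $(12)^n2$ carries an annotation, that annotation is $0$.
   Context: Untyped $\lambda$-calculus modulo $\alpha$. A fixed point combinator is a term $Y$ with $Yz=_\beta z(Yz)$ for a variable $z$ not free in $Y$. Head reduction step: $\lambda x_1\ldots x_n.(\lambda y.P)QQ_1\ldots Q_m \to \lambda x_1\ldots x_n.P[y:=Q]Q_1\ldots Q_m$; hnf: $\lambda x_1\ldots x_n.\,yQ_1\ldots Q_m$. The clocked Böhm tree $\mathrm{BT}^c(M)$ is defined coinductively: $\bot$ if $M$ has no hnf; otherwise, if $M\to_h^k \lambda x_1\ldots x_n.\,yM_1\ldots M_m$ is the head reduction to hnf ($k$ steps), $\mathrm{BT}^c(M)$ is the tree $\lambda x_1\ldots x_n.\,y\,\mathrm{BT}^c(M_1)\ldots\mathrm{BT}^c(M_m)$ whose root node is annotated with $k$. Positions are sequences over $\{0,1,2\}$ in applicative notation: $0$ enters an abstraction body, $1$ the function part and $2$ the argument of an application (so in a tree $f\,S\,T=(fS)T$, $S$ is at position $12$ and $T$ at position $2$); $(12)^n2$ denotes $n$ repetitions of $12$ followed by $2$. *)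

theory Defs
  imports Main
begin

datatype dB = Var nat | App dB dB | Abs dB

primrec lift :: "dB \<Rightarrow> nat \<Rightarrow> dB" where
  "lift (Var i) k = (if i < k then Var i else Var (Suc i))"
| "lift (App s t) k = App (lift s k) (lift t k)"
| "lift (Abs s) k = Abs (lift s (Suc k))"

text \<open>subst s t k  =  s[k := t] (capture avoiding, removing binder k)\<close>
primrec subst :: "dB \<Rightarrow> dB \<Rightarrow> nat \<Rightarrow> dB" where
  "subst (Var i) t k = (if k < i then Var (i - 1) else if i = k then t else Var i)"
| "subst (App s u) t k = App (subst s t k) (subst u t k)"
| "subst (Abs s) t k = Abs (subst s (lift t 0) (Suc k))"

primrec free :: "dB \<Rightarrow> nat \<Rightarrow> bool" where
  "free (Var j) i = (j = i)"
| "free (App s t) i = (free s i \<or> free t i)"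
| "free (Abs s) i = free s (Suc i)"

inductive beta :: "dB \<Rightarrow> dB \<Rightarrow> bool" where
  beta_redex: "beta (App (Abs s) t) (subst s t 0)"
| appL: "beta s t \<Longrightarrow> beta (App s u) (App t u)"
| appR: "beta s t \<Longrightarrow> beta (App u s) (App u t)"
| abs: "beta s t \<Longrightarrow> beta (Abs s) (Abs t)"

definition beta_eq :: "dB \<Rightarrow> dB \<Rightarrow> bool" where
  "beta_eq = equivclp beta"

definition fixed_point_combinator :: "dB \<Rightarrow> bool" where
  "fixed_point_combinator Y \<longleftrightarrow>
     (\<exists>z. \<not> free Y z \<and> beta_eq (App Y (Var z)) (App (Var z) (App Y (Var z))))"

fun hred :: "dB \<Rightarrow> dB option" where
  "hred (Var i) = None"
| "hred (Abs s) = map_option Abs (hred s)"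
| "hred (App (Abs s) t) = Some (subst s t 0)"
| "hred (App (Var i) t) = None"
| "hred (App (App s u) t) = map_option (\<lambda>s'. App s' t) (hred (App s u))"

definition hsteps :: "nat \<Rightarrow> dB \<Rightarrow> dB option" where
  "hsteps k M = ((\<lambda>m. Option.bind m hred) ^^ k) (Some M)"

primrec strip_abs :: "dB \<Rightarrow> nat \<times> dB" where
  "strip_abs (Var i) = (0, Var i)"
| "strip_abs (App s t) = (0, App s t)"
| "strip_abs (Abs s) = (let (n, b) = strip_abs s in (Suc n, b))"

primrec spine :: "dB \<Rightarrow> dB \<times> dB list" where
  "spine (Var i) = (Var i, [])"
| "spine (Abs s) = (Abs s, [])"
| "spine (App s t) = (let (h, as) = spine s in (h, as @ [t]))"

definition is_hnf :: "dB \<Rightarrow> bool" where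
  "is_hnf M \<longleftrightarrow> (\<exists>y. fst (spine (snd (strip_abs M))) = Var y)"

definition has_hnf :: "dB \<Rightarrow> bool" where
  "has_hnf M \<longleftrightarrow> (\<exists>k N. hsteps k M = Some N \<and> is_hnf N)"

definition hnf_k :: "dB \<Rightarrow> nat" where
  "hnf_k M = (LEAST k. \<exists>N. hsteps k M = Some N \<and> is_hnf N)"

definition hnf_of :: "dB \<Rightarrow> dB" where
  "hnf_of M = the (hsteps (hnf_k M) M)"

definition hnf_lams :: "dB \<Rightarrow> nat" where
  "hnf_lams N = fst (strip_abs N)"

definition hnf_var :: "dB \<Rightarrow> nat" where
  "hnf_var N = (case fst (spine (snd (strip_abs N))) of Var y \<Rightarrow> y | _ \<Rightarrow> 0)"

definition hnf_args :: "dB \<Rightarrow> dB list" where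
  "hnf_args N = snd (spine (snd (strip_abs N)))"

text \<open>CNode k n y ts : the tree  \<lambda>x1..xn. y t1 ... tm  with root annotation k
  (y a de Bruijn index relative to the n binders).\<close>
codatatype ctree = CBot | CNode nat nat nat "ctree list"

primcorec BTc :: "dB \<Rightarrow> ctree" where
  "BTc M = (if has_hnf M
            then CNode (hnf_k M) (hnf_lams (hnf_of M)) (hnf_var (hnf_of M))
                   (map BTc (hnf_args (hnf_of M)))
            else CBot)"

definition nargs :: "ctree \<Rightarrow> nat" where
  "nargs t = (case t of CBot \<Rightarrow> 0 | CNode k n y ts \<Rightarrow> length ts)"

text \<open>walk p t i j : follow position p starting from the piece
  \<lambda>x_(i+1)..x_n. y t_1 .. t_j  of the node t (i binders and all but j arguments removed).
  0 enters an abstraction body, 1 the function part, 2 the argument of an application.\<close>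
fun walk :: "nat list \<Rightarrow> ctree \<Rightarrow> nat \<Rightarrow> nat \<Rightarrow> (ctree \<times> nat \<times> nat) option" where
  "walk [] t i j = Some (t, i, j)"
| "walk (d # p) t i j =
     (case t of CBot \<Rightarrow> None
      | CNode k n y ts \<Rightarrow>
          (if d = 0 \<and> i < n then walk p t (Suc i) j
           else if d = 1 \<and> i = n \<and> 0 < j then walk p t i (j - 1)
           else if d = 2 \<and> i = n \<and> 0 < j then walk p (ts ! (j - 1)) 0 (nargs (ts ! (j - 1)))
           else None))"

text \<open>The annotation carried by the subtree at position p (None if there is no such
  subtree, or it is bot, or it is not a root node of some BT^c and so has no annotation).\<close>
definition annot_at :: "ctree \<Rightarrow> nat list \<Rightarrow> nat option" where
  "annot_at t p =
     (case walk p t 0 (nargs t) of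
        Some (CNode k n y ts, i, j) \<Rightarrow> (if i = 0 \<and> j = length ts then Some k else None)
      | _ \<Rightarrow> None)"

text \<open>B'_Y = Y (\<lambda>x. f x (f x (Y (\<lambda>y. f x y)))) with f the free variable (index) f.\<close>
definition Bprime :: "dB \<Rightarrow> nat \<Rightarrow> dB" where
  "Bprime Y f =
     App Y (Abs (App (App (Var (Suc f)) (Var 0))
                     (App (App (Var (Suc f)) (Var 0))
                          (App (lift Y 0)
                               (Abs (App (App (Var (Suc (Suc f))) (Var 1)) (Var 0)))))))"

end

theory Submission
  imports Defs
begin

text \<open>
  Let \<open>E = Y z\<close>, so \<open>E =\<^sub>\<beta> z E\<close>. By Church--Rosser and standardization, every
  \<open>Q =\<^sub>\<beta> E\<close> weak-head reduces to some \<open>z Q\<^sub>1\<close> with again \<open>Q\<^sub>1 =\<^sub>\<beta> E\<close>.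
  Substituting \<open>F = \<lambda>x. f x (f x (Y (\<lambda>y. f x y)))\<close> for \<open>z\<close> turns \<open>E\<close> into \<open>B'\<^sub>Y\<close>,
  and \<open>Q[z:=F]\<close> head reduces to \<open>F (Q\<^sub>1[z:=F])\<close> and then to the head normal form
  \<open>f X (f X W)\<close> with \<open>X = Q\<^sub>1[z:=F]\<close>. The argument \<open>f X W\<close> at position 2 is already a
  head normal form, so it is annotated 0, and the subtree at position 12 is the
  B\<ouml>hm tree of a term of the same kind; induction on \<open>n\<close> finishes the proof.
\<close>

declare subst.simps(1) [simp del] if_not_P [simp] not_less_eq [simp]

lemma subst_eq [simp]: "subst (Var k) u k = u"
  by (simp add: subst.simps)

lemma subst_gt [simp]: "i < j \<Longrightarrow> subst (Var j) u i = Var (j - 1)"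
  by (simp add: subst.simps)

lemma subst_lt [simp]: "j < i \<Longrightarrow> subst (Var j) u i = Var j"
  by (simp add: subst.simps)

lemma lift_lift: "i < k + 1 \<Longrightarrow> lift (lift t i) (Suc k) = lift (lift t k) i"
  by (induct t arbitrary: i k) auto

lemma lift_subst [simp]:
  "j < i + 1 \<Longrightarrow> lift (subst t s j) i = subst (lift t (i + 1)) (lift s i) j"
  by (induct t arbitrary: i j s)
    (simp_all add: diff_Suc subst.simps lift_lift split: nat.split)

lemma lift_subst_lt:
  "i < j + 1 \<Longrightarrow> lift (subst t s j) i = subst (lift t i) (lift s i) (j + 1)"
  by (induct t arbitrary: i j s) (simp_all add: subst.simps lift_lift)

lemma subst_lift [simp]: "subst (lift t k) s k = t"
  by (induct t arbitrary: k s) simp_all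

lemma subst_lift_not_free: "\<not> free t k \<Longrightarrow> subst (lift t (Suc k)) u k = t"
  by (induct t arbitrary: k u) (auto simp: subst.simps)

lemma subst_subst:
  "i < j + 1 \<Longrightarrow>
    subst (subst t (lift v i) (Suc j)) (subst u v j) i = subst (subst t u i) v j"
  by (induct t arbitrary: i j u v)
    (simp_all add: diff_Suc subst.simps lift_lift [symmetric] lift_subst_lt split: nat.split)

lemma subst_subst_0:
  "subst (subst t u 0) v k = subst (subst t (lift v 0) (Suc k)) (subst u v k) 0"
  using subst_subst [of 0 k t v u] by simp

section \<open>Confluence of beta reduction\<close>

inductive par :: "dB \<Rightarrow> dB \<Rightarrow> bool" where
  pvar [simp, intro!]: "par (Var n) (Var n)"
| pabs [simp, intro!]: "par s t \<Longrightarrow> par (Abs s) (Abs t)"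
| papp [simp, intro!]: "par s s' \<Longrightarrow> par t t' \<Longrightarrow> par (App s t) (App s' t')"
| pbeta [simp, intro!]: "par s s' \<Longrightarrow> par t t' \<Longrightarrow> par (App (Abs s) t) (subst s' t' 0)"

inductive_cases par_cases [elim!]:
  "par (Var n) t"
  "par (Abs s) (Abs t)"
  "par (App (Abs s) t) u"
  "par (App s t) u"
  "par (Abs s) t"

inductive_cases beta_cases [elim!]:
  "beta (Var i) t"
  "beta (Abs r) s"
  "beta (App s t) u"

declare beta.intros [simp, intro!]

lemma par_refl [simp]: "par t t"
  by (induct t) simp_all

lemma beta_imp_par: "beta s t \<Longrightarrow> par s t"
  by (induct rule: beta.induct) auto

lemma rtrancl_beta_Abs: "beta\<^sup>*\<^sup>* s s' \<Longrightarrow> beta\<^sup>*\<^sup>* (Abs s) (Abs s')"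
  by (induct set: rtranclp) (blast intro: rtranclp.rtrancl_into_rtrancl)+

lemma rtrancl_beta_AppL: "beta\<^sup>*\<^sup>* s s' \<Longrightarrow> beta\<^sup>*\<^sup>* (App s t) (App s' t)"
  by (induct set: rtranclp) (blast intro: rtranclp.rtrancl_into_rtrancl)+

lemma rtrancl_beta_AppR: "beta\<^sup>*\<^sup>* t t' \<Longrightarrow> beta\<^sup>*\<^sup>* (App s t) (App s t')"
  by (induct set: rtranclp) (blast intro: rtranclp.rtrancl_into_rtrancl)+

lemma rtrancl_beta_App:
  "beta\<^sup>*\<^sup>* s s' \<Longrightarrow> beta\<^sup>*\<^sup>* t t' \<Longrightarrow> beta\<^sup>*\<^sup>* (App s t) (App s' t')"
  by (blast intro!: rtrancl_beta_AppL rtrancl_beta_AppR intro: rtranclp_trans)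

lemma par_imp_rtrancl_beta: "par s t \<Longrightarrow> beta\<^sup>*\<^sup>* s t"
proof (induct rule: par.induct)
  case (pbeta s s' t t')
  then have "beta\<^sup>*\<^sup>* (App (Abs s) t) (App (Abs s') t')"
    by (blast intro: rtrancl_beta_App rtrancl_beta_Abs)
  then show ?case by (blast intro: rtranclp.rtrancl_into_rtrancl)
qed (auto intro: rtrancl_beta_App rtrancl_beta_Abs)

lemma par_lift [simp]: "par t t' \<Longrightarrow> par (lift t n) (lift t' n)"
  by (induct t arbitrary: t' n) fastforce+

lemma par_subst: "par t t' \<Longrightarrow> par s s' \<Longrightarrow> par (subst t s n) (subst t' s' n)"
proof (induct t t' arbitrary: s s' n rule: par.induct)
  case (pvar i)
  then show ?case by (simp add: subst.simps)
next
  case (pbeta u u' t t')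
  then have "par (App (Abs (subst u (lift s 0) (Suc n))) (subst t s n))
    (subst (subst u' (lift s' 0) (Suc n)) (subst t' s' n) 0)"
    by simp
  then show ?case by (simp add: subst_subst_0)
qed simp_all

fun cd :: "dB \<Rightarrow> dB" where
  "cd (Var n) = Var n"
| "cd (App (Var n) t) = App (Var n) (cd t)"
| "cd (App (App s1 s2) t) = App (cd (App s1 s2)) (cd t)"
| "cd (App (Abs u) t) = subst (cd u) (cd t) 0"
| "cd (Abs s) = Abs (cd s)"

lemma par_cd: "par s t \<Longrightarrow> par t (cd s)"
  by (induct s arbitrary: t rule: cd.induct) (auto intro!: par_subst)

lemma par_strip:
  "par\<^sup>*\<^sup>* s u \<Longrightarrow> par s t \<Longrightarrow> \<exists>v. par\<^sup>*\<^sup>* t v \<and> par u v"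
proof (induct arbitrary: t rule: rtranclp.induct)
  case (rtrancl_into_rtrancl a b c)
  then obtain v where "par\<^sup>*\<^sup>* t v" "par b v" by blast
  moreover have "par v (cd b)" "par c (cd b)"
    using \<open>par b v\<close> \<open>par b c\<close> par_cd by auto
  ultimately show ?case by (meson rtranclp.rtrancl_into_rtrancl)
qed blast

lemma rtrancl_par_confluent:
  "par\<^sup>*\<^sup>* s t \<Longrightarrow> par\<^sup>*\<^sup>* s u \<Longrightarrow> \<exists>v. par\<^sup>*\<^sup>* t v \<and> par\<^sup>*\<^sup>* u v"
proof (induct arbitrary: u rule: rtranclp.induct)
  case (rtrancl_into_rtrancl a b c)
  then obtain v where v: "par\<^sup>*\<^sup>* b v" "par\<^sup>*\<^sup>* u v" by blast
  from par_strip [OF v(1) \<open>par b c\<close>] obtain w where "par\<^sup>*\<^sup>* c w" "par v w" by blast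
  with v show ?case by (meson rtranclp.rtrancl_into_rtrancl)
qed blast

lemma rtrancl_beta_eq_rtrancl_par: "beta\<^sup>*\<^sup>* s t \<longleftrightarrow> par\<^sup>*\<^sup>* s t"
proof
  show "beta\<^sup>*\<^sup>* s t \<Longrightarrow> par\<^sup>*\<^sup>* s t"
    by (induct rule: rtranclp.induct) (auto intro: rtranclp.rtrancl_into_rtrancl beta_imp_par)
  show "par\<^sup>*\<^sup>* s t \<Longrightarrow> beta\<^sup>*\<^sup>* s t"
    by (induct rule: rtranclp.induct) (auto intro: rtranclp_trans par_imp_rtrancl_beta)
qed

lemma beta_confluent:
  "beta\<^sup>*\<^sup>* s t \<Longrightarrow> beta\<^sup>*\<^sup>* s u \<Longrightarrow> \<exists>v. beta\<^sup>*\<^sup>* t v \<and> beta\<^sup>*\<^sup>* u v"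
  using rtrancl_par_confluent by (simp add: rtrancl_beta_eq_rtrancl_par)

lemma beta_eq_Church_Rosser: "beta_eq s t \<Longrightarrow> \<exists>v. beta\<^sup>*\<^sup>* s v \<and> beta\<^sup>*\<^sup>* t v"
  unfolding beta_eq_def
proof (induct rule: equivclp_induct)
  case (step y z)
  then obtain v where v: "beta\<^sup>*\<^sup>* s v" "beta\<^sup>*\<^sup>* y v" by blast
  from \<open>beta y z \<or> beta z y\<close> show ?case
  proof
    assume "beta y z"
    from beta_confluent [OF v(2) r_into_rtranclp [of beta, OF this]]
    obtain w where "beta\<^sup>*\<^sup>* v w" "beta\<^sup>*\<^sup>* z w" by blast
    with v show ?thesis by (blast intro: rtranclp_trans)
  next
    assume "beta z y"
    with v show ?thesis by (blast intro: converse_rtranclp_into_rtranclp)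
  qed
qed blast

section \<open>Weak head reduction and standardization\<close>

inductive wh :: "dB \<Rightarrow> dB \<Rightarrow> bool" where
  wbeta: "wh (App (Abs s) t) (subst s t 0)"
| wapp: "wh s s' \<Longrightarrow> wh (App s t) (App s' t)"

inductive_cases wh_cases: "wh (Abs s) t" "wh (Var i) t"

lemma rtrancl_wh_imp_rtrancl_beta: "wh\<^sup>*\<^sup>* s t \<Longrightarrow> beta\<^sup>*\<^sup>* s t"
proof (induct rule: rtranclp.induct)
  case (rtrancl_into_rtrancl a b c)
  from \<open>wh b c\<close> have "beta b c" by (induct rule: wh.induct) auto
  with rtrancl_into_rtrancl show ?case by (auto intro: rtranclp.rtrancl_into_rtrancl)
qed simp

lemma wh_imp_hred: "wh s t \<Longrightarrow> hred s = Some t"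
proof (induct rule: wh.induct)
  case (wapp s s' t)
  then show ?case by (cases s) (auto elim: wh_cases)
qed simp

lemma wh_lift: "wh s t \<Longrightarrow> wh (lift s k) (lift t k)"
  by (induct arbitrary: k rule: wh.induct) (simp_all add: wh.intros)

lemma wh_subst: "wh s t \<Longrightarrow> wh (subst s u k) (subst t u k)"
  by (induct arbitrary: u k rule: wh.induct) (simp_all add: wh.intros subst_subst_0)

lemma rtrancl_wh_lift: "wh\<^sup>*\<^sup>* s t \<Longrightarrow> wh\<^sup>*\<^sup>* (lift s k) (lift t k)"
  by (induct rule: rtranclp.induct) (auto intro: rtranclp.rtrancl_into_rtrancl wh_lift)

lemma rtrancl_wh_subst: "wh\<^sup>*\<^sup>* s t \<Longrightarrow> wh\<^sup>*\<^sup>* (subst s u k) (subst t u k)"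
  by (induct rule: rtranclp.induct) (auto intro: rtranclp.rtrancl_into_rtrancl wh_subst)

lemma rtrancl_wh_AppL: "wh\<^sup>*\<^sup>* s s' \<Longrightarrow> wh\<^sup>*\<^sup>* (App s t) (App s' t)"
  by (induct rule: rtranclp.induct) (auto intro: rtranclp.rtrancl_into_rtrancl wh.wapp)

inductive std :: "dB \<Rightarrow> dB \<Rightarrow> bool" where
  std_Var: "wh\<^sup>*\<^sup>* M (Var n) \<Longrightarrow> std M (Var n)"
| std_App: "wh\<^sup>*\<^sup>* M (App M1 M2) \<Longrightarrow> std M1 N1 \<Longrightarrow> std M2 N2 \<Longrightarrow> std M (App N1 N2)"
| std_Abs: "wh\<^sup>*\<^sup>* M (Abs M1) \<Longrightarrow> std M1 N1 \<Longrightarrow> std M (Abs N1)"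

inductive_cases std_cases: "std M (Var n)" "std M (App N1 N2)" "std M (Abs N1)"

lemma std_refl: "std M M"
  by (induct M) (auto intro: std.intros)

lemma rtrancl_wh_std_trans: "wh\<^sup>*\<^sup>* M M' \<Longrightarrow> std M' N \<Longrightarrow> std M N"
  by (erule std.cases) (auto intro: std.intros rtranclp_trans)

lemma std_lift: "std M N \<Longrightarrow> std (lift M k) (lift N k)"
proof (induct arbitrary: k rule: std.induct)
  case (std_Var M n)
  then have "wh\<^sup>*\<^sup>* (lift M k) (lift (Var n) k)" by (rule rtrancl_wh_lift)
  then show ?case by (auto intro: std.std_Var)
next
  case (std_App M M1 M2 N1 N2)
  then have "wh\<^sup>*\<^sup>* (lift M k) (App (lift M1 k) (lift M2 k))" using rtrancl_wh_lift by fastforce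
  with std_App show ?case by (auto intro: std.std_App)
next
  case (std_Abs M M1 N1)
  then have "wh\<^sup>*\<^sup>* (lift M k) (Abs (lift M1 (Suc k)))" using rtrancl_wh_lift by fastforce
  with std_Abs show ?case by (auto intro: std.std_Abs)
qed

lemma std_subst: "std M M' \<Longrightarrow> std N N' \<Longrightarrow> std (subst M N k) (subst M' N' k)"
proof (induct arbitrary: N N' k rule: std.induct)
  case (std_Var M n)
  then have "wh\<^sup>*\<^sup>* (subst M N k) (subst (Var n) N k)" by (blast intro: rtrancl_wh_subst)
  with std_Var show ?case
    by (cases n k rule: linorder_cases) (auto intro: std.std_Var rtrancl_wh_std_trans)
next
  case (std_App M M1 M2 N1 N2)
  from rtrancl_wh_subst [OF std_App(1), of N k]
  have "wh\<^sup>*\<^sup>* (subst M N k) (App (subst M1 N k) (subst M2 N k))" by simp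
  with std_App show ?case by (auto intro: std.std_App)
next
  case (std_Abs M M1 N1)
  from rtrancl_wh_subst [OF std_Abs(1), of N k]
  have "wh\<^sup>*\<^sup>* (subst M N k) (Abs (subst M1 (lift N 0) (Suc k)))" by simp
  moreover have "std (lift N 0) (lift N' 0)" using std_Abs std_lift by blast
  ultimately show ?case using std_Abs by (auto intro: std.std_Abs)
qed

lemma std_beta_trans: "beta N N' \<Longrightarrow> std M N \<Longrightarrow> std M N'"
proof (induct arbitrary: M rule: beta.induct)
  case (beta_redex s t)
  then obtain M1 M2 where M: "wh\<^sup>*\<^sup>* M (App M1 M2)" "std M1 (Abs s)" "std M2 t"
    by (auto elim: std_cases)
  from M(2) obtain P where P: "wh\<^sup>*\<^sup>* M1 (Abs P)" "std P s" by (auto elim: std_cases)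
  have "wh\<^sup>*\<^sup>* M (App (Abs P) M2)" using M(1) rtrancl_wh_AppL [OF P(1)] by (rule rtranclp_trans)
  then have "wh\<^sup>*\<^sup>* M (subst P M2 0)" by (rule rtranclp.rtrancl_into_rtrancl) (rule wbeta)
  moreover have "std (subst P M2 0) (subst s t 0)" using P(2) M(3) by (rule std_subst)
  ultimately show ?case by (rule rtrancl_wh_std_trans)
qed (auto elim!: std_cases intro: std.intros)

lemma rtrancl_beta_imp_std: "beta\<^sup>*\<^sup>* M N \<Longrightarrow> std M N"
  by (induct rule: rtranclp.induct) (auto intro: std_refl std_beta_trans)

lemma std_imp_rtrancl_beta: "std M N \<Longrightarrow> beta\<^sup>*\<^sup>* M N"
  by (induct rule: std.induct)
    (meson rtrancl_wh_imp_rtrancl_beta rtrancl_beta_App rtrancl_beta_Abs rtranclp_trans)+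

lemma rtrancl_beta_Var_App_imp_wh:
  assumes "beta\<^sup>*\<^sup>* M (App (Var z) P)"
  shows "\<exists>Q. wh\<^sup>*\<^sup>* M (App (Var z) Q) \<and> beta\<^sup>*\<^sup>* Q P"
proof -
  from rtrancl_beta_imp_std [OF assms]
  obtain M1 M2 where M: "wh\<^sup>*\<^sup>* M (App M1 M2)" "std M1 (Var z)" "std M2 P"
    by (auto elim: std_cases)
  from M(2) have "wh\<^sup>*\<^sup>* M1 (Var z)" by (auto elim: std_cases)
  with M(1) have "wh\<^sup>*\<^sup>* M (App (Var z) M2)" by (metis rtrancl_wh_AppL rtranclp_trans)
  with M(3) show ?thesis using std_imp_rtrancl_beta by blast
qed

lemma rtrancl_beta_from_Var_App:
  "beta\<^sup>*\<^sup>* (App (Var z) E) R \<Longrightarrow> \<exists>R'. R = App (Var z) R' \<and> beta\<^sup>*\<^sup>* E R'"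
proof (induct R rule: rtranclp_induct)
  case (step b c)
  then obtain R' where "b = App (Var z) R'" "beta\<^sup>*\<^sup>* E R'" by blast
  with step(2) show ?case by (auto intro: rtranclp.rtrancl_into_rtrancl)
qed blast

lemma beta_eq_Var_App_imp_wh:
  assumes "beta_eq M (App (Var z) N)"
  shows "\<exists>Q. wh\<^sup>*\<^sup>* M (App (Var z) Q) \<and> beta_eq Q N"
proof -
  from beta_eq_Church_Rosser [OF assms]
  obtain v where v: "beta\<^sup>*\<^sup>* M v" "beta\<^sup>*\<^sup>* (App (Var z) N) v" by blast
  from rtrancl_beta_from_Var_App [OF v(2)]
  obtain R where R: "v = App (Var z) R" "beta\<^sup>*\<^sup>* N R" by blast
  from rtrancl_beta_Var_App_imp_wh v(1) R(1)
  obtain Q where Q: "wh\<^sup>*\<^sup>* M (App (Var z) Q)" "beta\<^sup>*\<^sup>* Q R" by blast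
  from Q(2) R(2) have "beta_eq Q N"
    unfolding beta_eq_def
    by (meson equivclp_trans rtranclp_into_equivclp converse_rtranclp_into_equivclp)
  with Q(1) show ?thesis by blast
qed

section \<open>Head normal forms and clocked B\<ouml>hm trees\<close>

lemma hsteps_0 [simp]: "hsteps 0 M = Some M"
  by (simp add: hsteps_def)

lemma hsteps_Suc: "hsteps (Suc k) M = Option.bind (hsteps k M) hred"
  by (simp add: hsteps_def)

lemma rtrancl_wh_imp_hsteps: "wh\<^sup>*\<^sup>* M N \<Longrightarrow> \<exists>k. hsteps k M = Some N"
proof (induct rule: rtranclp.induct)
  case (rtrancl_into_rtrancl a b c)
  then obtain k where "hsteps k a = Some b" by blast
  with wh_imp_hred [OF \<open>wh b c\<close>] have "hsteps (Suc k) a = Some c" by (simp add: hsteps_Suc)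
  then show ?case by blast
qed (use hsteps_0 in blast)

lemma spine_Var_hred: "fst (spine N) = Var y \<Longrightarrow> hred N = None"
proof (induct N)
  case (App s t)
  then show ?case by (cases s) (auto split: prod.splits)
qed simp_all

lemma is_hnf_hred: "is_hnf N \<Longrightarrow> hred N = None"
proof -
  have "fst (spine (snd (strip_abs N))) = Var y \<Longrightarrow> hred N = None" for y
    by (induct N) (auto simp: spine_Var_hred split: prod.splits)
  then show "is_hnf N \<Longrightarrow> hred N = None" unfolding is_hnf_def by blast
qed

lemma hsteps_add_None:
  "hsteps k M = Some N \<Longrightarrow> hred N = None \<Longrightarrow> hsteps (k + Suc j) M = None"
  by (induct j) (simp_all add: hsteps_Suc)

lemma hsteps_hnf_unique:
  assumes "hsteps k M = Some N" "is_hnf N" "hsteps k' M = Some N'" "is_hnf N'"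
  shows "k' = k"
proof (rule ccontr)
  assume "k' \<noteq> k"
  then consider j where "k = k' + Suc j" | j where "k' = k + Suc j"
    by (metis add_Suc_right less_imp_Suc_add linorder_neqE_nat)
  then show False
    using hsteps_add_None is_hnf_hred assms by cases (metis option.distinct(1))+
qed

lemma hsteps_hnf:
  assumes "hsteps k M = Some N" "is_hnf N"
  shows "has_hnf M" "hnf_k M = k" "hnf_of M = N"
proof -
  show "has_hnf M" unfolding has_hnf_def using assms by blast
  show k: "hnf_k M = k"
    unfolding hnf_k_def using assms hsteps_hnf_unique
    by (intro Least_equality) (blast, metis order_refl)
  show "hnf_of M = N" unfolding hnf_of_def k using assms(1) by simp
qed

lemma BTc_hsteps:
  assumes "hsteps k M = Some N" "is_hnf N"
  shows "BTc M = CNode k (hnf_lams N) (hnf_var N) (map BTc (hnf_args N))"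
  using hsteps_hnf [OF assms] by (subst BTc.code) simp

lemma BTc_hsteps_Var_App_App:
  "hsteps k M = Some (App (App (Var f) X) A) \<Longrightarrow> BTc M = CNode k 0 f [BTc X, BTc A]"
  by (simp add: BTc_hsteps is_hnf_def hnf_lams_def hnf_var_def hnf_args_def)

lemma annot_at_Nil [simp]: "annot_at (CNode k n y ts) [] = Some k"
  by (simp add: annot_at_def nargs_def)

lemma annot_at_arg [simp]: "annot_at (CNode k 0 y [T1, T2]) (2 # p) = annot_at T2 p"
  by (simp add: annot_at_def nargs_def)

text \<open>Stated with \<open>Suc 0\<close>, the simp normal form of \<open>1 :: nat\<close> in position lists.\<close>

lemma annot_at_fun_arg [simp]:
  "annot_at (CNode k 0 y [T1, T2]) (Suc 0 # 2 # p) = annot_at T1 p"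
  by (simp add: annot_at_def nargs_def)

section \<open>The annotations along the spine\<close>

definition spine_pos :: "nat \<Rightarrow> nat list" where
  "spine_pos n = concat (replicate n [1, 2]) @ [2]"

lemma spine_pos_0 [simp]: "spine_pos 0 = [2]"
  by (simp add: spine_pos_def)

lemma spine_pos_Suc [simp]: "spine_pos (Suc n) = Suc 0 # 2 # spine_pos n"
  by (simp add: spine_pos_def)

text \<open>\<open>subst (lift Q (Suc z)) F z\<close> is \<open>Q[z:=F]\<close>, leaving the other free indices unchanged.\<close>

context
  fixes E F :: dB and z f :: nat
  assumes fixed_point: "beta_eq E (App (Var z) E)"
    and unfold: "\<And>X. \<exists>W. wh\<^sup>*\<^sup>* (App F X) (App (App (Var f) X) (App (App (Var f) X) W))"
begin

lemma BTc_subst_unfold: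
  assumes "beta_eq Q E"
  obtains Q1 k W where "beta_eq Q1 E"
    and "BTc (subst (lift Q (Suc z)) F z) = CNode k 0 f
      [BTc (subst (lift Q1 (Suc z)) F z), CNode 0 0 f [BTc (subst (lift Q1 (Suc z)) F z), BTc W]]"
proof -
  let ?inst = "\<lambda>M. subst (lift M (Suc z)) F z"
  from assms have "beta_eq Q (App (Var z) E)"
    using fixed_point unfolding beta_eq_def by (rule equivclp_trans)
  then obtain Q1 where Q1: "wh\<^sup>*\<^sup>* Q (App (Var z) Q1)" "beta_eq Q1 E"
    using beta_eq_Var_App_imp_wh by blast
  obtain W where "wh\<^sup>*\<^sup>* (App F (?inst Q1))
      (App (App (Var f) (?inst Q1)) (App (App (Var f) (?inst Q1)) W))"
    using unfold by blast
  with rtrancl_wh_subst [OF rtrancl_wh_lift [OF Q1(1)], of "Suc z" F z]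
  have "wh\<^sup>*\<^sup>* (?inst Q) (App (App (Var f) (?inst Q1)) (App (App (Var f) (?inst Q1)) W))"
    by simp
  then obtain k where "hsteps k (?inst Q) =
      Some (App (App (Var f) (?inst Q1)) (App (App (Var f) (?inst Q1)) W))"
    using rtrancl_wh_imp_hsteps by blast
  then have "BTc (?inst Q) =
      CNode k 0 f [BTc (?inst Q1), BTc (App (App (Var f) (?inst Q1)) W)]"
    by (rule BTc_hsteps_Var_App_App)
  also have "BTc (App (App (Var f) (?inst Q1)) W) = CNode 0 0 f [BTc (?inst Q1), BTc W]"
    by (rule BTc_hsteps_Var_App_App [OF hsteps_0])
  finally show thesis using Q1(2) that by blast
qed

lemma annot_at_spine_zero:
  "beta_eq Q E \<Longrightarrow>
    annot_at (BTc (subst (lift Q (Suc z)) F z)) (spine_pos n) = Some k \<Longrightarrow>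
    k = 0"
proof (induct n arbitrary: Q)
  case 0
  obtain Q1 k' W where "beta_eq Q1 E" and "BTc (subst (lift Q (Suc z)) F z) = CNode k' 0 f
      [BTc (subst (lift Q1 (Suc z)) F z), CNode 0 0 f [BTc (subst (lift Q1 (Suc z)) F z), BTc W]]"
    by (rule BTc_subst_unfold [OF \<open>beta_eq Q E\<close>])
  with 0 show ?case by simp
next
  case (Suc n)
  obtain Q1 k' W where "beta_eq Q1 E" and "BTc (subst (lift Q (Suc z)) F z) = CNode k' 0 f
      [BTc (subst (lift Q1 (Suc z)) F z), CNode 0 0 f [BTc (subst (lift Q1 (Suc z)) F z), BTc W]]"
    by (rule BTc_subst_unfold [OF \<open>beta_eq Q E\<close>])
  with Suc.prems(2) have "annot_at (BTc (subst (lift Q1 (Suc z)) F z)) (spine_pos n) = Some k"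
    by simp
  with \<open>beta_eq Q1 E\<close> show ?case by (rule Suc.hyps)
qed

end

theorem lemma5p2:
  fixes Y :: dB and f :: nat
  assumes "fixed_point_combinator Y"
  shows "\<forall>n k. annot_at (BTc (Bprime Y f)) (concat (replicate n [1, 2]) @ [2]) = Some k
           \<longrightarrow> k = 0"
proof (intro allI impI)
  fix n k
  assume annot: "annot_at (BTc (Bprime Y f)) (concat (replicate n [1, 2]) @ [2]) = Some k"
  from assms obtain z where "\<not> free Y z"
    and fixed_point: "beta_eq (App Y (Var z)) (App (Var z) (App Y (Var z)))"
    unfolding fixed_point_combinator_def by blast
  define body where "body = App (App (Var (Suc f)) (Var 0)) (App (App (Var (Suc f)) (Var 0))
    (App (lift Y 0) (Abs (App (App (Var (Suc (Suc f))) (Var 1)) (Var 0)))))"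
  have inst: "subst (lift (App Y (Var z)) (Suc z)) (Abs body) z = Bprime Y f"
    by (simp add: Bprime_def body_def subst_lift_not_free [OF \<open>\<not> free Y z\<close>])
  have unfold: "\<exists>W. wh\<^sup>*\<^sup>* (App (Abs body) X) (App (App (Var f) X) (App (App (Var f) X) W))" for X
    using wh.wbeta [of body X] by (auto simp: body_def)
  have "beta_eq (App Y (Var z)) (App Y (Var z))" by (simp add: beta_eq_def)
  from annot_at_spine_zero [OF fixed_point unfold this, unfolded inst spine_pos_def, OF annot]
  show "k = 0" .
qed

end
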